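(* Let $\kappa$ be a regular uncountable cardinal and let $\rho_2$ be obtained by walking along a $C$-sequence $\vec C$ over $\kappa$. Then for every infinite cardinal $\theta<\chi(\vec C)$, the tree $(T(\rho_2),\subseteq)$ admits no $\theta$-ascending path.
   Context: A $C$-sequence over $\kappa$ is $\vec C=\langle C_\delta\mid\delta<\kappa\rangle$, each $C_\delta$ closed in $\delta$ with $\sup(C_\delta)=\sup(\delta)$. $\chi(\vec C)$ is the least cardinal $\chi\le\kappa$ for which there is a cofinal $\Gamma\subseteq\kappa$ such that for every $\epsilon<\kappa$ there is $\Delta\in[\kappa]^\chi$ with $\Gamma\cap\epsilon\subseteq\bigcup_{\delta\in\Delta}C_\delta$. Walks: $\mathrm{Tr}(\beta,\gamma)(0)=\gamma$, $\mathrm{Tr}(\beta,\gamma)(n)=\min(C_{\mathrm{Tr}(\beta,\gamma)(n-1)}\setminus\beta)$ if $\mathrm{Tr}(\beta,\gamma)(n-1)>\beta$, else $\beta$; $\rho_2(\beta,\gamma)$ is the least $l$ with $\mathrm{Tr}(\beta,\gamma)(l)=\beta$. $T(\rho_2)=\{\rho_{2\delta}\restriction\gamma\mid\gamma\le\delta<\kappa\}$ under $\subseteq$, with $\rho_{2\delta}(\xi)=\rho_2(\xi,\delta)$; its $\gamma$-th level $T_\gamma$ consists of the elements with domain $\gamma$. For an infinite cardinal $\theta$, a $\theta$-ascending path through a tree $(T,<_T)$ of height $\kappa$ is a sequence $\langle f_\gamma\mid\gamma<\kappa\rangle$ with $f_\gamma:\theta\to T_\gamma$ and such that for all $\gamma<\delta<\kappa$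 there are $i,j<\theta$ with $f_\gamma(i)<_Tf_\delta(j)$. *)

theory Defs
  imports Main "HOL-Library.Countable_Set"
begin

unbundle cardinal_syntax

text \<open>The cardinal kappa is represented by a type 'a of class wellorder whose
order type is kappa (i.e. the ordinals below kappa are the elements of 'a).\<close>

definition ord_rel :: "('a::wellorder) rel" where
  "ord_rel = {(x, y). x \<le> y}"

definition regular_uncountable :: "'a::wellorder itself \<Rightarrow> bool" where
  "regular_uncountable _ \<longleftrightarrow>
     Card_order (ord_rel :: 'a rel) \<and> regularCard (ord_rel :: 'a rel) \<and>
     \<not> countable (UNIV :: 'a set)"

definition ord_sup :: "('a::wellorder) set \<Rightarrow> 'a" where
  "ord_sup X = (LEAST u. \<forall>x\<in>X. x \<le> u)"

definition closed_in_ord :: "('a::wellorder) set \<Rightarrow> 'a \<Rightarrow> bool" where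
  "closed_in_ord C \<delta> \<longleftrightarrow>
     (\<forall>\<gamma><\<delta>. C \<inter> {..<\<gamma>} \<noteq> {} \<and> ord_sup (C \<inter> {..<\<gamma>}) = \<gamma> \<longrightarrow> \<gamma> \<in> C)"

definition C_sequence :: "('a::wellorder \<Rightarrow> 'a set) \<Rightarrow> bool" where
  "C_sequence C \<longleftrightarrow>
     (\<forall>\<delta>. C \<delta> \<subseteq> {..<\<delta>} \<and> closed_in_ord (C \<delta>) \<delta> \<and> ord_sup (C \<delta>) = ord_sup {..<\<delta>})"

fun Tr :: "('a::wellorder \<Rightarrow> 'a set) \<Rightarrow> 'a \<Rightarrow> 'a \<Rightarrow> nat \<Rightarrow> 'a" where
  "Tr C \<beta> \<gamma> 0 = \<gamma>"
| "Tr C \<beta> \<gamma> (Suc n) =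
     (if \<beta> < Tr C \<beta> \<gamma> n then (LEAST x. x \<in> C (Tr C \<beta> \<gamma> n) \<and> \<beta> \<le> x) else \<beta>)"

definition rho2 :: "('a::wellorder \<Rightarrow> 'a set) \<Rightarrow> 'a \<Rightarrow> 'a \<Rightarrow> nat" where
  "rho2 C \<beta> \<gamma> = (LEAST l. Tr C \<beta> \<gamma> l = \<beta>)"

definition rho2_restr :: "('a::wellorder \<Rightarrow> 'a set) \<Rightarrow> 'a \<Rightarrow> 'a \<Rightarrow> ('a \<Rightarrow> nat option)" where
  "rho2_restr C \<delta> \<gamma> = (\<lambda>\<xi>. if \<xi> < \<gamma> then Some (rho2 C \<xi> \<delta>) else None)"

definition T_level :: "('a::wellorder \<Rightarrow> 'a set) \<Rightarrow> 'a \<Rightarrow> ('a \<Rightarrow> nat option) set" where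
  "T_level C \<gamma> = {rho2_restr C \<delta> \<gamma> | \<delta>. \<gamma> \<le> \<delta>}"

text \<open>A theta-ascending path through (T(rho_2), subset), theta given as the
cardinality of the index set Theta; the tree order is inclusion of graphs.\<close>
definition ascending_path ::
  "('a::wellorder \<Rightarrow> 'a set) \<Rightarrow> 'b set \<Rightarrow> ('a \<Rightarrow> 'b \<Rightarrow> ('a \<Rightarrow> nat option)) \<Rightarrow> bool" where
  "ascending_path C \<Theta> f \<longleftrightarrow>
     (\<forall>\<gamma>. \<forall>i\<in>\<Theta>. f \<gamma> i \<in> T_level C \<gamma>) \<and>
     (\<forall>\<gamma> \<delta>. \<gamma> < \<delta> \<longrightarrow> (\<exists>i\<in>\<Theta>. \<exists>j\<in>\<Theta>. f \<gamma> i \<subseteq>\<^sub>m f \<delta> j))"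

text \<open>The cardinal |B| has the property whose least instance defines chi(C).\<close>
definition chi_property :: "('a::wellorder \<Rightarrow> 'a set) \<Rightarrow> 'c set \<Rightarrow> bool" where
  "chi_property C B \<longleftrightarrow>
     (\<exists>\<Gamma>::'a set. (\<forall>a. \<exists>g\<in>\<Gamma>. a \<le> g) \<and>
        (\<forall>\<epsilon>. \<exists>\<Delta>::'a set. |\<Delta>| =o |B| \<and> \<Gamma> \<inter> {..<\<epsilon>} \<subseteq> (\<Union>\<delta>\<in>\<Delta>. C \<delta>)))"

text \<open>theta < chi(C): no cardinal mu \<le> theta has the chi-property (chi(C) is the least
cardinal \<le> kappa with the property).\<close>
definition less_chi :: "'b set \<Rightarrow> ('a::wellorder \<Rightarrow> 'a set) \<Rightarrow> bool" where
  "less_chi \<Theta> C \<longleftrightarrow>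
     (\<forall>B::'a set. |B| \<le>o |\<Theta>| \<longrightarrow> \<not> chi_property C B)"

end

theory Submission
  imports Defs
begin

(* Suppose f were a \<theta>-ascending path and write each node f \<gamma> i as \<rho>\<^sub>2\<^sub>\<delta> restricted to \<gamma>.
   If cf \<gamma> > \<theta>, then on a final segment [b, \<gamma>) the function \<rho>\<^sub>2(-, \<delta>) attains its least
   value c exactly on C q, for some q \<ge> \<gamma> with C q cofinal in \<gamma> (every walk from \<delta> to a
   point just below \<gamma> passes through q), and b can be chosen uniformly in i.  A pressing-down
   argument yields m < n and unboundedly many such levels \<gamma> with left end m at which every C q
   meets [m, n).  Two nodes on different levels agree below the lower level and both attain
   their least values in [m, n), so these values coincide and the two sets C q agree above m.
   Hence the points of [m, \<gamma>) lying in all C q of such a level \<gamma> form an unbounded set, which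
   below any \<epsilon> is covered by the \<theta> sets C q of one such level above \<epsilon>; so \<chi>(C) \<le> \<theta>.
   When \<kappa> \<le> \<theta>\<^sup>+ this is immediate. *)

section \<open>Small sets below a regular uncountable cardinal\<close>

lemma Field_ord_rel [simp]: "Field (ord_rel :: 'a::wellorder rel) = UNIV"
  unfolding ord_rel_def Field_def by auto

lemma underS_ord_rel: "underS (ord_rel :: 'a::wellorder rel) a = {..<a}"
  unfolding ord_rel_def underS_def by auto

lemma under_ord_rel: "under (ord_rel :: 'a::wellorder rel) a = {..a}"
  unfolding ord_rel_def under_def by auto

lemma regular_uncountableD:
  assumes "regular_uncountable TYPE('a::wellorder)"
  shows "Card_order (ord_rel :: 'a rel)" "regularCard (ord_rel :: 'a rel)"
    and "\<not> countable (UNIV :: 'a set)" "|UNIV :: 'a set| =o (ord_rel :: 'a rel)"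
proof -
  show card: "Card_order (ord_rel :: 'a rel)"
    and "regularCard (ord_rel :: 'a rel)" "\<not> countable (UNIV :: 'a set)"
    using assms unfolding regular_uncountable_def by blast+
  show "|UNIV :: 'a set| =o (ord_rel :: 'a rel)"
    using card_of_Field_ordIso[OF card] by simp
qed

lemma regular_uncountable_no_max:
  assumes "regular_uncountable TYPE('a::wellorder)"
  shows "\<exists>b. (a::'a) < b"
proof (rule ccontr)
  assume "\<nexists>b. a < b"
  hence "Field (ord_rel :: 'a rel) = under ord_rel a"
    by (auto simp: under_ord_rel not_less)
  moreover have "infinite (Field (ord_rel :: 'a rel))"
    using regular_uncountableD(3)[OF assms] by (auto dest: countable_finite)
  ultimately show False
    using Card_order_infinite_not_under[OF regular_uncountableD(1)[OF assms]] by blast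
qed

lemma unbounded_card_of_ordIso:
  assumes R: "regular_uncountable TYPE('a::wellorder)" and K: "\<forall>a. \<exists>k\<in>K. a < k"
  shows "|K :: 'a set| =o |UNIV :: 'a set|"
proof -
  have "cofinal K (ord_rel :: 'a rel)"
    unfolding cofinal_def
  proof
    fix a :: 'a
    obtain k where "k \<in> K" "a < k" using K by blast
    thus "\<exists>k\<in>K. a \<noteq> k \<and> (a, k) \<in> ord_rel" by (auto simp: ord_rel_def)
  qed
  hence "|K| =o (ord_rel :: 'a rel)"
    using regular_uncountableD(2)[OF R] unfolding regularCard_def by auto
  thus ?thesis
    using regular_uncountableD(4)[OF R] ordIso_symmetric ordIso_transitive by blast
qed

lemma small_bounded:
  assumes R: "regular_uncountable TYPE('a::wellorder)" and S: "|S :: 'a set| <o |UNIV :: 'a set|"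
  shows "\<exists>w. \<forall>s\<in>S. s < w"
proof (rule ccontr)
  assume H: "\<nexists>w. \<forall>s\<in>S. s < w"
  have "\<forall>a. \<exists>s\<in>S. a < s"
  proof
    fix a :: 'a
    obtain b where "a < b" using regular_uncountable_no_max[OF R] by blast
    with H show "\<exists>s\<in>S. a < s" by (meson less_le_trans not_less)
  qed
  thus False
    using unbounded_card_of_ordIso[OF R] S not_ordLess_ordIso by blast
qed

lemma small_lessThan:
  assumes R: "regular_uncountable TYPE('a::wellorder)"
  shows "|{..<(a::'a)}| <o |UNIV :: 'a set|"
proof -
  have "|underS (ord_rel :: 'a rel) a| <o (ord_rel :: 'a rel)"
    using card_of_underS[OF regular_uncountableD(1)[OF R], of a] by simp
  thus ?thesis
    using regular_uncountableD(4)[OF R] ordIso_symmetric ordLess_ordIso_trans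
    unfolding underS_ord_rel by blast
qed

lemma small_countable:
  assumes R: "regular_uncountable TYPE('a::wellorder)" and "countable S"
  shows "|S| <o |UNIV :: 'a set|"
proof -
  have "|S| \<le>o |UNIV :: nat set|"
    using assms(2) unfolding countable_def card_of_ordLeq[symmetric] by blast
  moreover have "|UNIV :: nat set| <o |UNIV :: 'a set|"
    using regular_uncountableD(3)[OF R] unfolding card_of_ordLess[symmetric] countable_def by blast
  ultimately show ?thesis using ordLeq_ordLess_trans by blast
qed

lemma small_Times:
  assumes R: "regular_uncountable TYPE('a::wellorder)" and S: "|S| <o |UNIV :: 'a set|"
  shows "|S \<times> S| <o |UNIV :: 'a set|"
proof (cases "finite S")
  case True
  show ?thesis
    by (rule small_countable[OF R countable_finite[OF finite_cartesian_product[OF True True]]])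
next
  case False
  show ?thesis by (rule ordIso_ordLess_trans[OF card_of_Times_same_infinite[OF False] S])
qed

lemma small_insert:
  assumes R: "regular_uncountable TYPE('a::wellorder)" and S: "|S| <o |UNIV :: 'a set|"
  shows "|insert (a::'a) S| <o |UNIV :: 'a set|"
proof -
  have "infinite (UNIV :: 'a set)"
    using regular_uncountableD(3)[OF R] by (auto dest: countable_finite)
  moreover have "|{a}| <o |UNIV :: 'a set|" by (rule small_countable[OF R]) simp
  ultimately have "|{a} \<union> S| <o |UNIV :: 'a set|" using card_of_Un_ordLess_infinite S by blast
  thus ?thesis by simp
qed

section \<open>Walks\<close>

definition least_elem :: "'a::wellorder" where
  "least_elem = (LEAST x. True)"

lemma least_elem_le [simp]: "least_elem \<le> (x::'a::wellorder)"
  unfolding least_elem_def by (rule Least_le) simp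

lemma ord_sup_le: "\<forall>x\<in>X. x \<le> v \<Longrightarrow> ord_sup X \<le> v"
  unfolding ord_sup_def by (rule Least_le) simp

lemma ord_sup_upper:
  assumes "\<forall>x\<in>X. x \<le> v" and "x \<in> X"
  shows "x \<le> ord_sup X"
proof -
  have "\<forall>x\<in>X. x \<le> (LEAST u. \<forall>x\<in>X. x \<le> u)" by (rule LeastI[of _ v]) (rule assms(1))
  thus ?thesis using assms(2) unfolding ord_sup_def by blast
qed

lemma less_ord_sup_iff:
  assumes "\<forall>x\<in>X. x \<le> v"
  shows "y < ord_sup X \<longleftrightarrow> (\<exists>x\<in>X. y < x)"
  using ord_sup_upper[OF assms] ord_sup_le[of X y] by (meson le_less_trans not_le)

lemma ord_sup_eqI:
  "\<forall>x\<in>X. x \<le> u \<Longrightarrow> (\<And>v. \<forall>x\<in>X. x \<le> v \<Longrightarrow> u \<le> v) \<Longrightarrow> ord_sup X = u"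
  unfolding ord_sup_def by (rule Least_equality) blast+

lemma ord_sup_empty: "ord_sup {} = least_elem"
  unfolding ord_sup_def least_elem_def by simp

lemma C_sequenceD:
  assumes "C_sequence C"
  shows "C \<delta> \<subseteq> {..<\<delta>}" "closed_in_ord (C \<delta>) \<delta>" "ord_sup (C \<delta>) = ord_sup {..<\<delta>}"
  using assms unfolding C_sequence_def by blast+

lemma closed_in_ord_mem:
  assumes "closed_in_ord D \<delta>" "\<beta> < \<delta>" "least_elem < \<beta>"
    and "\<forall>a<\<beta>. \<exists>t\<in>D. a < t \<and> t < \<beta>"
  shows "\<beta> \<in> D"
proof -
  have "D \<inter> {..<\<beta>} \<noteq> {}" using assms(3,4) by blast
  moreover have "ord_sup (D \<inter> {..<\<beta>}) = \<beta>"
  proof (rule ord_sup_eqI)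
    fix v assume "\<forall>x\<in>D \<inter> {..<\<beta>}. x \<le> v"
    thus "\<beta> \<le> v" using assms(4) by (meson IntI lessThan_iff not_le order.strict_trans2)
  qed auto
  ultimately show ?thesis using assms(1,2) unfolding closed_in_ord_def by blast
qed

definition walk_next :: "('a::wellorder \<Rightarrow> 'a set) \<Rightarrow> 'a \<Rightarrow> 'a \<Rightarrow> 'a" where
  "walk_next C \<beta> \<gamma> = (LEAST x. x \<in> C \<gamma> \<and> \<beta> \<le> x)"

text \<open>For \<open>\<beta> = least_elem\<close> the set \<open>C \<gamma>\<close> may be empty (e.g. when \<open>\<gamma>\<close> is the successor of
  \<open>least_elem\<close>), so walks are only considered down to \<open>\<beta> > least_elem\<close>.\<close>
lemma walk_next_exists:
  assumes CS: "C_sequence C" and "least_elem < \<beta>" "\<beta> < \<gamma>"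
  shows "\<exists>x\<in>C \<gamma>. \<beta> \<le> x"
proof (rule ccontr)
  assume "\<not> (\<exists>x\<in>C \<gamma>. \<beta> \<le> x)"
  hence below: "\<forall>x\<in>C \<gamma>. x < \<beta>" by (auto simp: not_le)
  have "ord_sup (C \<gamma>) \<le> \<beta>" using below by (intro ord_sup_le) auto
  moreover have "\<beta> \<le> ord_sup {..<\<gamma>}" using \<open>\<beta> < \<gamma>\<close> by (intro ord_sup_upper[of _ \<gamma>]) auto
  ultimately have sup: "ord_sup (C \<gamma>) = \<beta>" using C_sequenceD(3)[OF CS, of \<gamma>] by simp
  hence "C \<gamma> \<noteq> {}" using ord_sup_empty \<open>least_elem < \<beta>\<close> by (metis less_irrefl)
  moreover have "C \<gamma> \<inter> {..<\<beta>} = C \<gamma>" using below by auto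
  ultimately have "\<beta> \<in> C \<gamma>"
    using C_sequenceD(2)[OF CS, of \<gamma>] sup \<open>\<beta> < \<gamma>\<close> unfolding closed_in_ord_def by auto
  thus False using below by auto
qed

lemma walk_next:
  assumes CS: "C_sequence C" and "least_elem < \<beta>" "\<beta> < \<gamma>"
  shows "walk_next C \<beta> \<gamma> \<in> C \<gamma>" "\<beta> \<le> walk_next C \<beta> \<gamma>" "walk_next C \<beta> \<gamma> < \<gamma>"
proof -
  obtain x where "x \<in> C \<gamma> \<and> \<beta> \<le> x" using walk_next_exists[OF assms] by blast
  hence "walk_next C \<beta> \<gamma> \<in> C \<gamma> \<and> \<beta> \<le> walk_next C \<beta> \<gamma>" unfolding walk_next_def by (rule LeastI)
  thus "walk_next C \<beta> \<gamma> \<in> C \<gamma>" "\<beta> \<le> walk_next C \<beta> \<gamma>" "walk_next C \<beta> \<gamma> < \<gamma>"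
    using C_sequenceD(1)[OF CS, of \<gamma>] by auto
qed

lemma walk_next_le: "x \<in> C \<gamma> \<Longrightarrow> \<beta> \<le> x \<Longrightarrow> walk_next C \<beta> \<gamma> \<le> x"
  unfolding walk_next_def by (rule Least_le) simp

lemma walk_next_eq_iff:
  assumes "C_sequence C" "least_elem < \<beta>" "\<beta> < \<gamma>"
  shows "walk_next C \<beta> \<gamma> = \<beta> \<longleftrightarrow> \<beta> \<in> C \<gamma>"
  using walk_next_le[of \<beta> C \<gamma> \<beta>] walk_next[OF assms] by auto

lemma Tr_Suc_walk_next: "\<beta> < \<gamma> \<Longrightarrow> Tr C \<beta> \<gamma> (Suc n) = Tr C \<beta> (walk_next C \<beta> \<gamma>) n"
  by (induction n) (simp_all add: walk_next_def)

lemma Tr_reaches: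
  assumes CS: "C_sequence C" and "least_elem < \<beta>"
  shows "\<beta> \<le> \<gamma> \<Longrightarrow> \<exists>l. Tr C \<beta> \<gamma> l = \<beta>"
proof (induction \<gamma> rule: less_induct)
  case (less \<gamma>)
  show ?case
  proof (cases "\<beta> = \<gamma>")
    case True
    thus ?thesis by (intro exI[of _ 0]) simp
  next
    case False
    hence "\<beta> < \<gamma>" using less.prems by simp
    then obtain l where "Tr C \<beta> (walk_next C \<beta> \<gamma>) l = \<beta>"
      using less.IH walk_next[OF CS \<open>least_elem < \<beta>\<close>] by blast
    thus ?thesis using Tr_Suc_walk_next[OF \<open>\<beta> < \<gamma>\<close>] by metis
  qed
qed

lemma rho2_self [simp]: "rho2 C \<beta> \<beta> = 0"
  unfolding rho2_def by simp

lemma rho2_step: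
  assumes CS: "C_sequence C" and "least_elem < \<beta>" "\<beta> < \<gamma>"
  shows "rho2 C \<beta> \<gamma> = Suc (rho2 C \<beta> (walk_next C \<beta> \<gamma>))"
proof -
  obtain l where l: "Tr C \<beta> (walk_next C \<beta> \<gamma>) l = \<beta>"
    using Tr_reaches[OF CS \<open>least_elem < \<beta>\<close> walk_next(2)[OF assms]] by blast
  show ?thesis unfolding rho2_def
    by (rule Least_Suc2[where n = "Suc l" and m = l])
      (use l Tr_Suc_walk_next[OF \<open>\<beta> < \<gamma>\<close>, of C] \<open>\<beta> < \<gamma>\<close> in auto)
qed

lemma rho2_eq_0_iff:
  assumes "C_sequence C" "least_elem < \<beta>" "\<beta> \<le> \<gamma>"
  shows "rho2 C \<beta> \<gamma> = 0 \<longleftrightarrow> \<beta> = \<gamma>"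
  using rho2_step[OF assms(1,2)] assms(3) by (cases "\<beta> = \<gamma>") auto

section \<open>Simple forms of \<open>\<rho>\<^sub>2\<close> below a limit\<close>

definition is_limit :: "'a::wellorder \<Rightarrow> bool" where
  "is_limit \<gamma> \<longleftrightarrow> least_elem < \<gamma> \<and> (\<forall>z<\<gamma>. \<exists>w. z < w \<and> w < \<gamma>)"

definition cofinal_below :: "'a::wellorder set \<Rightarrow> 'a \<Rightarrow> bool" where
  "cofinal_below T \<gamma> \<longleftrightarrow> (\<forall>a<\<gamma>. \<exists>t\<in>T. a \<le> t \<and> t < \<gamma>)"

lemma ord_sup_lessThan_limit:
  assumes "is_limit \<gamma>"
  shows "ord_sup {..<\<gamma>} = \<gamma>"
proof (rule ord_sup_eqI)
  fix v assume "\<forall>x\<in>{..<\<gamma>}. x \<le> v"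
  thus "\<gamma> \<le> v" using assms unfolding is_limit_def by (meson lessThan_iff not_le order.strict_trans1)
qed auto

lemma C_sequence_cofinal_below_limit:
  assumes CS: "C_sequence C" and "is_limit \<gamma>"
  shows "cofinal_below (C \<gamma>) \<gamma>"
  unfolding cofinal_below_def
proof (intro allI impI)
  fix a assume "a < \<gamma>"
  show "\<exists>t\<in>C \<gamma>. a \<le> t \<and> t < \<gamma>"
  proof (rule ccontr)
    assume "\<not> (\<exists>t\<in>C \<gamma>. a \<le> t \<and> t < \<gamma>)"
    hence "\<forall>t\<in>C \<gamma>. t \<le> a" using C_sequenceD(1)[OF CS, of \<gamma>] by (auto simp: not_le)
    hence "ord_sup (C \<gamma>) \<le> a" by (rule ord_sup_le)
    thus False using C_sequenceD(3)[OF CS] ord_sup_lessThan_limit[OF assms(2)] \<open>a < \<gamma>\<close> by simp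
  qed
qed

lemma walk_next_gap:
  assumes CS: "C_sequence C" and gap: "\<forall>t\<in>C \<delta>. \<not> (a \<le> t \<and> t < \<gamma>)"
    and "least_elem < x" "a \<le> x" "x < \<gamma>" "\<gamma> < \<delta>"
  shows "walk_next C x \<delta> = walk_next C \<gamma> \<delta>"
proof (rule antisym)
  have "least_elem < \<gamma>" using assms(3,5) by simp
  hence "walk_next C \<gamma> \<delta> \<in> C \<delta>" "\<gamma> \<le> walk_next C \<gamma> \<delta>"
    using walk_next[OF CS _ \<open>\<gamma> < \<delta>\<close>] by auto
  thus "walk_next C x \<delta> \<le> walk_next C \<gamma> \<delta>" using \<open>x < \<gamma>\<close> by (intro walk_next_le) auto
  have "walk_next C x \<delta> \<in> C \<delta>" "x \<le> walk_next C x \<delta>"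
    using walk_next[OF CS \<open>least_elem < x\<close>] assms(5,6) by auto
  hence "\<gamma> \<le> walk_next C x \<delta>" using gap \<open>a \<le> x\<close> by (meson not_le order.trans)
  thus "walk_next C \<gamma> \<delta> \<le> walk_next C x \<delta>" using \<open>walk_next C x \<delta> \<in> C \<delta>\<close> by (rule walk_next_le[rotated])
qed

text \<open>Induction on \<open>\<delta>\<close>: if \<open>C \<delta>\<close> is cofinal in \<open>\<gamma>\<close>, take \<open>q = \<delta>\<close>; otherwise \<open>C \<delta>\<close> misses some
  \<open>[a, \<gamma>)\<close>, and all walks from \<open>\<delta>\<close> to points of \<open>[a, \<gamma>)\<close> take the same first step.\<close>
lemma rho2_tail_decomposition:
  assumes CS: "C_sequence C" and L: "is_limit \<gamma>"
  shows "\<gamma> \<le> \<delta> \<Longrightarrow> \<exists>b c q. least_elem < b \<and> b < \<gamma> \<and> \<gamma> \<le> q \<and> cofinal_below (C q) \<gamma> \<and>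
            (\<forall>x. b \<le> x \<and> x < \<gamma> \<longrightarrow> rho2 C x \<delta> = c + rho2 C x (walk_next C x q))"
proof (induction \<delta> rule: less_induct)
  case (less \<delta>)
  obtain b0 where b0: "least_elem < b0" "b0 < \<gamma>" using L unfolding is_limit_def by blast
  show ?case
  proof (cases "\<delta> = \<gamma> \<or> cofinal_below (C \<delta>) \<gamma>")
    case True
    hence "cofinal_below (C \<delta>) \<gamma>" using C_sequence_cofinal_below_limit[OF CS L] by auto
    moreover have "rho2 C x \<delta> = 1 + rho2 C x (walk_next C x \<delta>)" if "b0 \<le> x \<and> x < \<gamma>" for x
    proof -
      have "least_elem < x" "x < \<delta>" using that b0 less.prems by auto
      thus ?thesis using rho2_step[OF CS] by simp
    qed
    ultimately show ?thesis using b0 less.prems by blast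
  next
    case False
    hence "\<gamma> < \<delta>" using less.prems by auto
    from False obtain a where a: "a < \<gamma>" "\<forall>t\<in>C \<delta>. \<not> (a \<le> t \<and> t < \<gamma>)"
      unfolding cofinal_below_def by blast
    define n where "n = walk_next C \<gamma> \<delta>"
    have n: "\<gamma> \<le> n" "n < \<delta>"
      using walk_next[OF CS _ \<open>\<gamma> < \<delta>\<close>] L unfolding n_def is_limit_def by auto
    obtain b c q where IH: "least_elem < b" "b < \<gamma>" "\<gamma> \<le> q" "cofinal_below (C q) \<gamma>"
      "\<forall>x. b \<le> x \<and> x < \<gamma> \<longrightarrow> rho2 C x n = c + rho2 C x (walk_next C x q)"
      using less.IH[OF n(2) n(1)] by blast
    have "rho2 C x \<delta> = Suc c + rho2 C x (walk_next C x q)" if x: "max a b \<le> x \<and> x < \<gamma>" for x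
    proof -
      have "least_elem < x" "x < \<delta>" using x IH(1) \<open>\<gamma> < \<delta>\<close> by (auto intro: order.strict_trans2)
      hence "rho2 C x \<delta> = Suc (rho2 C x n)"
        using rho2_step[OF CS, of x \<delta>] walk_next_gap[OF CS a(2), of x] x \<open>\<gamma> < \<delta>\<close>
        unfolding n_def by simp
      thus ?thesis using IH(5) x by simp
    qed
    moreover have "least_elem < max a b" "max a b < \<gamma>" using IH a by (auto simp: less_max_iff_disj)
    ultimately show ?thesis using IH(3,4) by blast
  qed
qed

definition rho2_simple_form ::
  "('a::wellorder \<Rightarrow> 'a set) \<Rightarrow> 'a \<Rightarrow> 'a \<Rightarrow> 'a \<Rightarrow> nat \<Rightarrow> 'a \<Rightarrow> bool" where
  "rho2_simple_form C \<gamma> \<delta> b c q \<longleftrightarrow>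
     least_elem < b \<and> b < \<gamma> \<and> \<gamma> \<le> q \<and> cofinal_below (C q) \<gamma> \<and>
     (\<forall>x. b \<le> x \<and> x < \<gamma> \<longrightarrow> c \<le> rho2 C x \<delta> \<and> (rho2 C x \<delta> = c \<longleftrightarrow> x \<in> C q))"

lemma rho2_simple_form_exists:
  assumes CS: "C_sequence C" and L: "is_limit \<gamma>" and "\<gamma> \<le> \<delta>"
  shows "\<exists>b c q. rho2_simple_form C \<gamma> \<delta> b c q"
proof -
  obtain b c q where H: "least_elem < b" "b < \<gamma>" "\<gamma> \<le> q" "cofinal_below (C q) \<gamma>"
    "\<forall>x. b \<le> x \<and> x < \<gamma> \<longrightarrow> rho2 C x \<delta> = c + rho2 C x (walk_next C x q)"
    using rho2_tail_decomposition[OF CS L assms(3)] by blast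
  have "c \<le> rho2 C x \<delta> \<and> (rho2 C x \<delta> = c \<longleftrightarrow> x \<in> C q)" if x: "b \<le> x \<and> x < \<gamma>" for x
  proof -
    have "least_elem < x" "x < q" using x H by auto
    hence "rho2 C x (walk_next C x q) = 0 \<longleftrightarrow> x \<in> C q"
      using rho2_eq_0_iff[OF CS _ walk_next(2)[OF CS]] walk_next_eq_iff[OF CS] by metis
    thus ?thesis using H(5) x by auto
  qed
  thus ?thesis using H(1-4) unfolding rho2_simple_form_def by blast
qed

lemma rho2_simple_form_mono:
  "rho2_simple_form C \<gamma> \<delta> b c q \<Longrightarrow> b \<le> b' \<Longrightarrow> b' < \<gamma> \<Longrightarrow> rho2_simple_form C \<gamma> \<delta> b' c q"
  unfolding rho2_simple_form_def by (blast intro: order.trans order.strict_trans2)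

text \<open>Both minima are attained in \<open>[b, l)\<close>, where the two walks agree, so \<open>c1 = c2\<close>.\<close>
lemma rho2_simple_form_transfer:
  assumes S1: "rho2_simple_form C \<gamma>1 \<delta>1 b c1 q1" and S2: "rho2_simple_form C \<gamma>2 \<delta>2 b c2 q2"
    and l: "l \<le> \<gamma>1" "l \<le> \<gamma>2" and agree: "\<forall>y<l. rho2 C y \<delta>1 = rho2 C y \<delta>2"
    and t1: "t1 \<in> C q1" "b \<le> t1" "t1 < l" and t2: "t2 \<in> C q2" "b \<le> t2" "t2 < l"
    and x: "b \<le> x" "x < l" "x \<in> C q1"
  shows "x \<in> C q2"
proof -
  have F1: "c1 \<le> rho2 C y \<delta>1 \<and> (rho2 C y \<delta>1 = c1 \<longleftrightarrow> y \<in> C q1)" if "b \<le> y" "y < l" for y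
    using S1 that l unfolding rho2_simple_form_def by auto
  have F2: "c2 \<le> rho2 C y \<delta>2 \<and> (rho2 C y \<delta>2 = c2 \<longleftrightarrow> y \<in> C q2)" if "b \<le> y" "y < l" for y
    using S2 that l unfolding rho2_simple_form_def by auto
  have "c2 \<le> c1" using F1[OF t1(2,3)] F2[OF t1(2,3)] agree t1 by metis
  moreover have "c1 \<le> c2" using F1[OF t2(2,3)] F2[OF t2(2,3)] agree t2 by metis
  ultimately show ?thesis using F1[OF x(1,2)] F2[OF x(1,2)] agree x by (metis order.antisym)
qed

section \<open>Ordinals of cofinality greater than \<open>|\<Theta>|\<close>\<close>

lemma Un_card_of_ordLeq:
  assumes "infinite \<Theta>" "|A| \<le>o |\<Theta>|" "|B| \<le>o |\<Theta>|"
  shows "|A \<union> B| \<le>o |\<Theta>|"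
  using card_of_Un_ordLeq_infinite_Field[of "|\<Theta>|" A B] assms
  by (simp add: Field_card_of card_of_Card_order card_of_card_order_on)

lemma insert_card_of_ordLeq:
  assumes "infinite \<Theta>" "|S| \<le>o |\<Theta>|"
  shows "|insert a S| \<le>o |\<Theta>|"
proof -
  obtain t where "t \<in> \<Theta>" using assms(1) by (metis finite.emptyI ex_in_conv)
  hence "|{a}| \<le>o |\<Theta>|" unfolding card_of_ordLeq[symmetric] by (intro exI[of _ "\<lambda>_. t"]) auto
  hence "|{a} \<union> S| \<le>o |\<Theta>|" by (rule Un_card_of_ordLeq[OF assms(1) _ assms(2)])
  thus ?thesis by simp
qed

lemma countable_card_of_ordLeq:
  assumes "infinite \<Theta>" "countable S"
  shows "|S| \<le>o |\<Theta>|"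
proof -
  have "|S| \<le>o |UNIV :: nat set|"
    using assms(2) unfolding countable_def card_of_ordLeq[symmetric] by blast
  thus ?thesis by (rule ordLeq_transitive[OF _ infinite_iff_card_of_nat[THEN iffD1, OF assms(1)]])
qed

definition cof_exceeds :: "'b set \<Rightarrow> 'a::wellorder \<Rightarrow> bool" where
  "cof_exceeds \<Theta> \<gamma> \<longleftrightarrow> (\<forall>S. S \<subseteq> {..<\<gamma>} \<and> |S| \<le>o |\<Theta>| \<longrightarrow> (\<exists>w<\<gamma>. \<forall>s\<in>S. s < w))"

lemma cof_exceedsD:
  "cof_exceeds \<Theta> \<gamma> \<Longrightarrow> S \<subseteq> {..<\<gamma>} \<Longrightarrow> |S| \<le>o |\<Theta>| \<Longrightarrow> \<exists>w<\<gamma>. \<forall>s\<in>S. s < w"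
  unfolding cof_exceeds_def by blast

lemma cof_exceeds_is_limit:
  assumes "infinite \<Theta>" "cof_exceeds \<Theta> \<gamma>"
  shows "is_limit \<gamma>"
  unfolding is_limit_def
proof (intro conjI allI impI)
  obtain w where "w < \<gamma>" using cof_exceedsD[OF assms(2), of "{}"] card_of_empty by blast
  thus "least_elem < \<gamma>" by (rule le_less_trans[OF least_elem_le])
  fix z assume "z < \<gamma>"
  have "|{z}| \<le>o |\<Theta>|" by (rule insert_card_of_ordLeq[OF assms(1) card_of_empty])
  thus "\<exists>w. z < w \<and> w < \<gamma>" using cof_exceedsD[OF assms(2), of "{z}"] \<open>z < \<gamma>\<close> by auto
qed

lemma cof_exceeds_cofinal_step:
  assumes inf: "infinite \<Theta>" and G: "cof_exceeds \<Theta> \<gamma>"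
    and Q: "\<forall>i\<in>\<Theta>. cofinal_below (D i) \<gamma>" and "y < \<gamma>"
  shows "\<exists>w<\<gamma>. y < w \<and> (\<forall>i\<in>\<Theta>. \<exists>t\<in>D i. y \<le> t \<and> t < w)"
proof -
  have "\<forall>i\<in>\<Theta>. \<exists>t. t \<in> D i \<and> y \<le> t \<and> t < \<gamma>"
    using Q \<open>y < \<gamma>\<close> unfolding cofinal_below_def by blast
  from bchoice[OF this] obtain t where t: "\<forall>i\<in>\<Theta>. t i \<in> D i \<and> y \<le> t i \<and> t i < \<gamma>"
    by blast
  have "insert y (t ` \<Theta>) \<subseteq> {..<\<gamma>}" using t \<open>y < \<gamma>\<close> by auto
  moreover have "|insert y (t ` \<Theta>)| \<le>o |\<Theta>|" by (rule insert_card_of_ordLeq[OF inf card_of_image])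
  ultimately obtain w where "w < \<gamma>" "\<forall>s\<in>insert y (t ` \<Theta>). s < w" using cof_exceedsD[OF G] by blast
  thus ?thesis using t by blast
qed

text \<open>The supremum of an \<open>\<omega>\<close>-sequence interleaving all the sets \<open>C (q i)\<close> lies in each of
  them by closedness, and below \<open>\<gamma>\<close> because \<open>cf \<gamma> > \<aleph>\<^sub>0\<close>.\<close>
lemma cofinal_below_INT:
  assumes CS: "C_sequence C" and inf: "infinite \<Theta>" and G: "cof_exceeds \<Theta> \<gamma>"
    and Q: "\<forall>i\<in>\<Theta>. \<gamma> \<le> q i \<and> cofinal_below (C (q i)) \<gamma>"
  shows "cofinal_below (\<Inter>i\<in>\<Theta>. C (q i)) \<gamma>"
  unfolding cofinal_below_def
proof (intro allI impI)
  fix a assume "a < \<gamma>"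
  have "\<forall>i\<in>\<Theta>. cofinal_below (C (q i)) \<gamma>" using Q by blast
  hence "\<exists>w. y < \<gamma> \<longrightarrow> w < \<gamma> \<and> y < w \<and> (\<forall>i\<in>\<Theta>. \<exists>t\<in>C (q i). y \<le> t \<and> t < w)" for y
    using cof_exceeds_cofinal_step[OF inf G, of "\<lambda>i. C (q i)" y] by (cases "y < \<gamma>") auto
  hence "\<forall>y. \<exists>w. y < \<gamma> \<longrightarrow> w < \<gamma> \<and> y < w \<and> (\<forall>i\<in>\<Theta>. \<exists>t\<in>C (q i). y \<le> t \<and> t < w)" ..
  from choice[OF this] obtain W
    where W: "\<forall>y. y < \<gamma> \<longrightarrow> W y < \<gamma> \<and> y < W y \<and> (\<forall>i\<in>\<Theta>. \<exists>t\<in>C (q i). y \<le> t \<and> t < W y)"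
    by blast
  define s where "s n = (W ^^ n) a" for n
  have s_less: "s n < \<gamma>" for n by (induction n) (simp_all add: s_def \<open>a < \<gamma>\<close> W[rule_format])
  have s_Suc: "s n < s (Suc n)" "\<forall>i\<in>\<Theta>. \<exists>t\<in>C (q i). s n \<le> t \<and> t < s (Suc n)" for n
    using W[rule_format, OF s_less[of n]] by (simp_all add: s_def)
  have "range s \<subseteq> {..<\<gamma>}" using s_less by auto
  moreover have "|range s| \<le>o |\<Theta>|" by (rule countable_card_of_ordLeq[OF inf]) simp
  ultimately obtain w where "w < \<gamma>" "\<forall>x\<in>range s. x < w" using cof_exceedsD[OF G] by blast
  hence w: "\<forall>x\<in>range s. x \<le> w" by (auto intro: less_imp_le)
  define \<beta> where "\<beta> = ord_sup (range s)"
  have s_le: "s n \<le> \<beta>" for n unfolding \<beta>_def by (rule ord_sup_upper[OF w]) simp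
  have "\<beta> < \<gamma>" using ord_sup_le[OF w] \<open>w < \<gamma>\<close> unfolding \<beta>_def by simp
  have "least_elem < \<beta>"
    using least_elem_le[of "s 0"] s_Suc(1)[of 0] s_le[of "Suc 0"] by (meson le_less_trans less_le_trans)
  have "\<beta> \<in> C (q i)" if i: "i \<in> \<Theta>" for i
  proof (rule closed_in_ord_mem[OF C_sequenceD(2)[OF CS]])
    show "\<beta> < q i" using \<open>\<beta> < \<gamma>\<close> Q i by (meson less_le_trans)
    show "\<forall>y<\<beta>. \<exists>t\<in>C (q i). y < t \<and> t < \<beta>"
    proof (intro allI impI)
      fix y assume "y < \<beta>"
      have "\<exists>x\<in>range s. y < x" using less_ord_sup_iff[OF w, of y] \<open>y < \<beta>\<close> \<beta>_def by simp
      then obtain n where "y < s n" by blast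
      obtain t where t: "t \<in> C (q i)" "s n \<le> t" "t < s (Suc n)" using s_Suc(2)[of n] i by blast
      have "y < t" using \<open>y < s n\<close> t(2) by (rule less_le_trans)
      moreover have "t < \<beta>" using t(3) s_le[of "Suc n"] by (rule less_le_trans)
      ultimately show "\<exists>t\<in>C (q i). y < t \<and> t < \<beta>" using t(1) by blast
    qed
  qed (rule \<open>least_elem < \<beta>\<close>)
  moreover have "a \<le> \<beta>" using s_le[of 0] by (simp add: s_def)
  ultimately show "\<exists>t\<in>\<Inter>i\<in>\<Theta>. C (q i). a \<le> t \<and> t < \<gamma>" using \<open>\<beta> < \<gamma>\<close> by blast
qed

lemma pairs_bounded_above:
  assumes R: "regular_uncountable TYPE('a::wellorder)"
  shows "\<exists>w. a < w \<and> (\<forall>\<mu> \<nu>. \<mu> < a \<and> \<nu> < a \<longrightarrow> F \<mu> \<nu> < (w::'a))"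
proof -
  let ?S = "insert a ((\<lambda>(\<mu>, \<nu>). F \<mu> \<nu>) ` ({..<a} \<times> {..<a}))"
  have "|(\<lambda>(\<mu>, \<nu>). F \<mu> \<nu>) ` ({..<a} \<times> {..<a})| <o |UNIV :: 'a set|"
    using card_of_image small_Times[OF R small_lessThan[OF R]] ordLeq_ordLess_trans by blast
  hence "|?S| <o |UNIV :: 'a set|" by (rule small_insert[OF R])
  then obtain w where w: "\<forall>s\<in>?S. s < w" using small_bounded[OF R] by blast
  have "F \<mu> \<nu> \<in> ?S" if "\<mu> < a \<and> \<nu> < a" for \<mu> \<nu>
    using that by (auto intro!: image_eqI[of _ _ "(\<mu>, \<nu>)"])
  thus ?thesis using w by blast
qed

lemma closure_points_unbounded:
  assumes R: "regular_uncountable TYPE('a::wellorder)"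
  shows "\<exists>\<beta>. x < \<beta> \<and> (\<forall>\<mu> \<nu>. \<mu> < \<beta> \<and> \<nu> < \<beta> \<longrightarrow> F \<mu> \<nu> < (\<beta>::'a))"
proof -
  have "\<forall>a. \<exists>w. a < w \<and> (\<forall>\<mu> \<nu>. \<mu> < a \<and> \<nu> < a \<longrightarrow> F \<mu> \<nu> < w)"
    using pairs_bounded_above[OF R] by blast
  from choice[OF this] obtain W
    where W: "\<forall>a. a < W a \<and> (\<forall>\<mu> \<nu>. \<mu> < a \<and> \<nu> < a \<longrightarrow> F \<mu> \<nu> < W a)" by blast
  obtain a where "x < a" using regular_uncountable_no_max[OF R] by blast
  define s where "s n = (W ^^ n) a" for n
  have s_Suc: "s (Suc n) = W (s n)" for n by (simp add: s_def)
  have s_mono: "m \<le> n \<Longrightarrow> s m \<le> s n" for m n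
    by (rule lift_Suc_mono_le[of s]) (use W s_Suc in \<open>simp add: less_imp_le\<close>)
  have "|range s| <o |UNIV :: 'a set|" by (rule small_countable[OF R]) simp
  then obtain w where "\<forall>y\<in>range s. y < w" using small_bounded[OF R] by blast
  hence w: "\<forall>y\<in>range s. y \<le> w" by (auto intro: less_imp_le)
  define \<beta> where "\<beta> = ord_sup (range s)"
  have s_le: "s n \<le> \<beta>" for n unfolding \<beta>_def by (rule ord_sup_upper[OF w]) simp
  have below: "\<exists>n. y < s n" if "y < \<beta>" for y
    using less_ord_sup_iff[OF w, of y] that unfolding \<beta>_def by auto
  have "F \<mu> \<nu> < \<beta>" if \<mu>\<nu>: "\<mu> < \<beta>" "\<nu> < \<beta>" for \<mu> \<nu>
  proof -
    obtain m n where "\<mu> < s m" "\<nu> < s n" using below \<mu>\<nu> by blast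
    hence "\<mu> < s (max m n)" "\<nu> < s (max m n)"
      using s_mono[of m "max m n"] s_mono[of n "max m n"] by auto
    hence "F \<mu> \<nu> < s (Suc (max m n))" using W s_Suc by simp
    thus ?thesis using s_le by (rule less_le_trans)
  qed
  moreover have "x < \<beta>" using \<open>x < a\<close> s_le[of 0] by (simp add: s_def)
  ultimately show ?thesis by blast
qed

lemma large_initial_segment:
  fixes K :: "'a::wellorder set"
  assumes R: "regular_uncountable TYPE('a::wellorder)"
    and K: "\<forall>x. \<exists>k\<in>K. x < k" and B: "\<not> |{..<(\<epsilon>::'a)}| \<le>o |\<Theta>|"
  shows "\<exists>a. \<not> |K \<inter> {..<a}| \<le>o |\<Theta>|"
proof -
  have "|{..<\<epsilon>}| \<le>o |K|"
    using card_of_mono1[of "{..<\<epsilon>}" UNIV] unbounded_card_of_ordIso[OF R K]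
      ordIso_symmetric ordLeq_ordIso_trans by blast
  then obtain h where h: "inj_on h {..<\<epsilon>}" "h ` {..<\<epsilon>} \<subseteq> K"
    unfolding card_of_ordLeq[symmetric] by blast
  have iso: "|{..<\<epsilon>}| =o |h ` {..<\<epsilon>}|" by (rule card_of_ordIsoI[OF inj_on_imp_bij_betw[OF h(1)]])
  hence "|h ` {..<\<epsilon>}| <o |UNIV :: 'a set|"
    using small_lessThan[OF R] ordIso_symmetric ordIso_ordLess_trans by blast
  then obtain a where "\<forall>s\<in>h ` {..<\<epsilon>}. s < a" using small_bounded[OF R] by blast
  hence "h ` {..<\<epsilon>} \<subseteq> K \<inter> {..<a}" using h(2) by auto
  hence "|{..<\<epsilon>}| \<le>o |K \<inter> {..<a}|" using iso card_of_mono1 ordIso_ordLeq_trans by blast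
  thus ?thesis using B ordLeq_transitive by blast
qed

lemma least_large_initial_segment:
  fixes K :: "'a::wellorder set" and \<Theta> :: "'b set"
  assumes inf: "infinite \<Theta>" and a: "\<not> |K \<inter> {..<a}| \<le>o |\<Theta>|"
    and \<gamma>: "\<gamma> = (LEAST g. \<not> |K \<inter> {..<g}| \<le>o |\<Theta>| )"
  shows "cof_exceeds \<Theta> \<gamma>" "cofinal_below K \<gamma>"
proof -
  have large: "\<not> |K \<inter> {..<\<gamma>}| \<le>o |\<Theta>|" unfolding \<gamma> by (rule LeastI[of _ a]) (rule a)
  have small: "|K \<inter> {..<k}| \<le>o |\<Theta>|" if "k < \<gamma>" for k
    using not_less_Least that unfolding \<gamma> by blast
  show "cof_exceeds \<Theta> \<gamma>" unfolding cof_exceeds_def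
  proof (intro allI impI)
    fix S :: "'a set" assume S: "S \<subseteq> {..<\<gamma>} \<and> |S| \<le>o |\<Theta>|"
    show "\<exists>w<\<gamma>. \<forall>s\<in>S. s < w"
    proof (rule ccontr)
      assume H: "\<not> (\<exists>w<\<gamma>. \<forall>s\<in>S. s < w)"
      have "K \<inter> {..<\<gamma>} \<subseteq> (\<Union>s\<in>S. insert s (K \<inter> {..<s}))"
      proof
        fix k assume k: "k \<in> K \<inter> {..<\<gamma>}"
        hence "\<not> (\<forall>s\<in>S. s < k)" using H by blast
        then obtain s where "s \<in> S" "k \<le> s" by (auto simp: not_less)
        thus "k \<in> (\<Union>s\<in>S. insert s (K \<inter> {..<s}))" using k by (auto simp: le_less)
      qed
      moreover have "\<forall>s\<in>S. |insert s (K \<inter> {..<s})| \<le>o |\<Theta>|"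
        using S by (auto intro: insert_card_of_ordLeq[OF inf] small)
      hence "|\<Union>s\<in>S. insert s (K \<inter> {..<s})| \<le>o |\<Theta>|"
        by (rule card_of_UNION_ordLeq_infinite[OF inf conjunct2[OF S]])
      ultimately show False using large ordLeq_transitive[OF card_of_mono1] by blast
    qed
  qed
  show "cofinal_below K \<gamma>" unfolding cofinal_below_def
  proof (intro allI impI)
    fix w assume "w < \<gamma>"
    show "\<exists>k\<in>K. w \<le> k \<and> k < \<gamma>"
    proof (rule ccontr)
      assume "\<not> (\<exists>k\<in>K. w \<le> k \<and> k < \<gamma>)"
      hence "K \<inter> {..<\<gamma>} \<subseteq> K \<inter> {..<w}" by (auto simp: not_le)
      thus False using large small[OF \<open>w < \<gamma>\<close>] ordLeq_transitive[OF card_of_mono1] by blast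
    qed
  qed
qed

lemma exists_cof_exceeds_closed:
  fixes F :: "'a::wellorder \<Rightarrow> 'a \<Rightarrow> 'a" and \<Theta> :: "'b set"
  assumes R: "regular_uncountable TYPE('a)" and inf: "infinite \<Theta>"
    and B: "\<not> |{..<(\<epsilon>::'a)}| \<le>o |\<Theta>|"
  shows "\<exists>\<gamma>. cof_exceeds \<Theta> \<gamma> \<and> (\<forall>\<mu> \<nu>. \<mu> < \<gamma> \<and> \<nu> < \<gamma> \<longrightarrow> F \<mu> \<nu> < \<gamma>)"
proof -
  define K where "K = {\<beta>. \<forall>\<mu> \<nu>. \<mu> < \<beta> \<and> \<nu> < \<beta> \<longrightarrow> F \<mu> \<nu> < \<beta>}"
  have "\<forall>x. \<exists>k\<in>K. x < k" using closure_points_unbounded[OF R] unfolding K_def by blast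
  then obtain a where a: "\<not> |K \<inter> {..<a}| \<le>o |\<Theta>|" using large_initial_segment[OF R _ B] by blast
  define \<gamma> where "\<gamma> = (LEAST g. \<not> |K \<inter> {..<g}| \<le>o |\<Theta>| )"
  note G = least_large_initial_segment(1)[OF inf a \<gamma>_def]
    and KG = least_large_initial_segment(2)[OF inf a \<gamma>_def]
  have "F \<mu> \<nu> < \<gamma>" if \<mu>\<nu>: "\<mu> < \<gamma>" "\<nu> < \<gamma>" for \<mu> \<nu>
  proof -
    have "max \<mu> \<nu> < \<gamma>" using \<mu>\<nu> by simp
    then obtain w where "max \<mu> \<nu> < w" "w < \<gamma>"
      using cof_exceeds_is_limit[OF inf G] unfolding is_limit_def by blast
    then obtain k where "k \<in> K" "w \<le> k" "k < \<gamma>" using KG unfolding cofinal_below_def by blast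
    hence "F \<mu> \<nu> < k" using \<open>max \<mu> \<nu> < w\<close> unfolding K_def by (auto intro: less_le_trans)
    thus ?thesis using \<open>k < \<gamma>\<close> by simp
  qed
  thus ?thesis using G by blast
qed

text \<open>Fodor's lemma for pairs, with the closure points of cofinality \<open>> |\<Theta>|\<close> in place of a
  stationary set.\<close>
lemma regressive_pairs_unbounded:
  fixes P :: "'a::wellorder \<Rightarrow> 'a \<Rightarrow> 'a \<Rightarrow> bool" and \<Theta> :: "'b set"
  assumes R: "regular_uncountable TYPE('a)" and inf: "infinite \<Theta>"
    and B: "\<not> |{..<(\<epsilon>::'a)}| \<le>o |\<Theta>|"
    and P: "\<And>\<gamma>. cof_exceeds \<Theta> \<gamma> \<Longrightarrow> \<exists>m<\<gamma>. \<exists>n<\<gamma>. P m n \<gamma>"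
  shows "\<exists>m n. \<forall>a. \<exists>\<gamma>>a. P m n \<gamma>"
proof (rule ccontr)
  assume "\<nexists>m n. \<forall>a. \<exists>\<gamma>>a. P m n \<gamma>"
  hence "\<forall>m n. \<exists>a. \<forall>\<gamma>. P m n \<gamma> \<longrightarrow> \<gamma> \<le> a" by (meson not_le)
  then obtain F where F: "\<And>m n \<gamma>. P m n \<gamma> \<Longrightarrow> \<gamma> \<le> F m n" by metis
  obtain \<gamma> where G: "cof_exceeds \<Theta> \<gamma>" and cl: "\<forall>\<mu> \<nu>. \<mu> < \<gamma> \<and> \<nu> < \<gamma> \<longrightarrow> F \<mu> \<nu> < \<gamma>"
    using exists_cof_exceeds_closed[OF R inf B] by blast
  obtain m n where "m < \<gamma>" "n < \<gamma>" "P m n \<gamma>" using P[OF G] by blast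
  thus False using F cl by (meson not_le)
qed

section \<open>Upper bounds for \<open>\<chi>(C)\<close>\<close>

text \<open>\<open>chi_property\<close> asks for covers of size exactly \<open>|B|\<close>; a set \<open>B\<close> of size
  \<open>min |\<Theta>| \<kappa>\<close> absorbs every cover of size at most \<open>|\<Theta>|\<close>.\<close>
lemma absorbing_set_exists:
  fixes \<Theta> :: "'b set"
  assumes inf: "infinite \<Theta>"
  obtains B :: "'a set" where "|B| \<le>o |\<Theta>|" "\<And>\<Delta>. |\<Delta>| \<le>o |\<Theta>| \<Longrightarrow> |\<Delta> \<union> B| =o |B|"
proof (cases "|\<Theta>| \<le>o |UNIV :: 'a set|")
  case True
  then obtain g :: "'b \<Rightarrow> 'a" where "inj_on g \<Theta>" unfolding card_of_ordLeq[symmetric] by blast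
  hence iso: "|\<Theta>| =o |g ` \<Theta>|" by (rule card_of_ordIsoI[OF inj_on_imp_bij_betw])
  show ?thesis
  proof (rule that[of "g ` \<Theta>"])
    show le: "|g ` \<Theta>| \<le>o |\<Theta>|" by (rule card_of_image)
    fix \<Delta> :: "'a set" assume "|\<Delta>| \<le>o |\<Theta>|"
    hence "|\<Delta> \<union> g ` \<Theta>| \<le>o |g ` \<Theta>|"
      using Un_card_of_ordLeq[OF inf _ le] iso ordLeq_ordIso_trans by blast
    moreover have "|g ` \<Theta>| \<le>o |\<Delta> \<union> g ` \<Theta>|" by (rule card_of_mono1) blast
    ultimately show "|\<Delta> \<union> g ` \<Theta>| =o |g ` \<Theta>|" by (simp add: ordIso_iff_ordLeq)
  qed
next
  case False
  hence "|UNIV :: 'a set| \<le>o |\<Theta>|"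
    using not_ordLeq_iff_ordLess[OF card_of_Well_order card_of_Well_order] ordLess_imp_ordLeq by blast
  thus ?thesis by (rule that[of UNIV]) (simp add: card_of_refl)
qed

lemma cover_not_less_chi:
  fixes C :: "'a::wellorder \<Rightarrow> 'a set" and \<Theta> :: "'b set" and \<Gamma> :: "'a set"
  assumes inf: "infinite \<Theta>" and unbounded: "\<forall>a. \<exists>g\<in>\<Gamma>. a \<le> g"
    and cover: "\<forall>\<epsilon>. \<exists>\<Delta>. |\<Delta>| \<le>o |\<Theta>| \<and> \<Gamma> \<inter> {..<\<epsilon>} \<subseteq> (\<Union>\<delta>\<in>\<Delta>. C \<delta>)"
  shows "\<not> less_chi \<Theta> C"
proof -
  obtain B :: "'a set" where B: "|B| \<le>o |\<Theta>|" "\<And>\<Delta>. |\<Delta>| \<le>o |\<Theta>| \<Longrightarrow> |\<Delta> \<union> B| =o |B|"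
    using absorbing_set_exists[OF inf] by blast
  have "chi_property C B" unfolding chi_property_def
  proof (rule exI[of _ \<Gamma>], intro conjI allI)
    show "\<exists>g\<in>\<Gamma>. a \<le> g" for a using unbounded by blast
    fix \<epsilon> :: 'a
    obtain \<Delta> where "|\<Delta>| \<le>o |\<Theta>|" "\<Gamma> \<inter> {..<\<epsilon>} \<subseteq> (\<Union>\<delta>\<in>\<Delta>. C \<delta>)" using cover by blast
    hence "|\<Delta> \<union> B| =o |B| \<and> \<Gamma> \<inter> {..<\<epsilon>} \<subseteq> (\<Union>\<delta>\<in>\<Delta> \<union> B. C \<delta>)" using B(2) by blast
    thus "\<exists>\<Delta>. |\<Delta>| =o |B| \<and> \<Gamma> \<inter> {..<\<epsilon>} \<subseteq> (\<Union>\<delta>\<in>\<Delta>. C \<delta>)" by blast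
  qed
  thus ?thesis using B(1) unfolding less_chi_def by blast
qed

lemma mem_C_successor:
  assumes R: "regular_uncountable TYPE('a::wellorder)" and CS: "C_sequence C"
    and "least_elem < (x::'a)"
  shows "x \<in> C (LEAST y. x < y)"
proof -
  define y where "y = (LEAST y. x < y)"
  have "x < y" unfolding y_def using regular_uncountable_no_max[OF R] by (metis LeastI)
  have below: "z \<le> x" if "z < y" for z
    using that not_less_Least[of z "\<lambda>y. x < y"] unfolding y_def by (simp add: not_less)
  have "x \<le> walk_next C x y" "walk_next C x y < y" using walk_next[OF CS assms(3) \<open>x < y\<close>] by auto
  hence "walk_next C x y = x" using below by (meson antisym)
  thus ?thesis using walk_next(1)[OF CS assms(3) \<open>x < y\<close>] unfolding y_def by simp
qed

text \<open>If \<open>\<kappa> \<le> \<theta>\<^sup>+\<close>, then \<open>\<chi>(C) \<le> \<theta>\<close> holds for every \<open>C\<close>: each \<open>x > 0\<close> lies in \<open>C (x + 1)\<close>.\<close>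
lemma small_initial_segments_not_less_chi:
  fixes C :: "'a::wellorder \<Rightarrow> 'a set" and \<Theta> :: "'b set"
  assumes R: "regular_uncountable TYPE('a)" and CS: "C_sequence C" and inf: "infinite \<Theta>"
    and small: "\<forall>\<epsilon>::'a. |{..<\<epsilon>}| \<le>o |\<Theta>|"
  shows "\<not> less_chi \<Theta> C"
proof -
  have unbounded: "\<forall>a. \<exists>g\<in>{x. least_elem < x}. a \<le> (g::'a)"
  proof
    fix a :: 'a
    obtain b where "a < b" using regular_uncountable_no_max[OF R] by blast
    moreover have "least_elem < b" using le_less_trans[OF least_elem_le \<open>a < b\<close>] .
    ultimately show "\<exists>g\<in>{x. least_elem < x}. a \<le> g" by auto
  qed
  have "\<forall>\<epsilon>. \<exists>\<Delta>. |\<Delta>| \<le>o |\<Theta>| \<and> {x. least_elem < x} \<inter> {..<\<epsilon>} \<subseteq> (\<Union>\<delta>\<in>\<Delta>. C \<delta>)"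
  proof
    fix \<epsilon> :: 'a
    let ?\<Delta> = "(\<lambda>x. LEAST y. x < y) ` {..<\<epsilon>}"
    have "|?\<Delta>| \<le>o |\<Theta>|" using ordLeq_transitive[OF card_of_image small[rule_format, of \<epsilon>]] .
    moreover have "{x. least_elem < x} \<inter> {..<\<epsilon>} \<subseteq> (\<Union>\<delta>\<in>?\<Delta>. C \<delta>)"
    proof
      fix x assume "x \<in> {x. least_elem < x} \<inter> {..<\<epsilon>}"
      thus "x \<in> (\<Union>\<delta>\<in>?\<Delta>. C \<delta>)" using mem_C_successor[OF R CS, of x] by blast
    qed
    ultimately show "\<exists>\<Delta>. |\<Delta>| \<le>o |\<Theta>| \<and> {x. least_elem < x} \<inter> {..<\<epsilon>} \<subseteq> (\<Union>\<delta>\<in>\<Delta>. C \<delta>)"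
      by blast
  qed
  thus ?thesis by (rule cover_not_less_chi[OF inf unbounded])
qed

section \<open>Ascending paths\<close>

lemma rho2_restr_map_le:
  assumes "rho2_restr C \<delta>1 \<gamma>1 \<subseteq>\<^sub>m rho2_restr C \<delta>2 \<gamma>2" "y < \<gamma>1"
  shows "rho2 C y \<delta>1 = rho2 C y \<delta>2"
proof -
  have "y \<in> dom (rho2_restr C \<delta>1 \<gamma>1)" using assms(2) by (simp add: rho2_restr_def dom_def)
  hence "rho2_restr C \<delta>1 \<gamma>1 y = rho2_restr C \<delta>2 \<gamma>2 y" using assms(1) unfolding map_le_def by blast
  thus ?thesis using assms(2) unfolding rho2_restr_def by (simp split: if_splits)
qed

lemma ascending_path_coherent_walks:
  assumes AP: "ascending_path C \<Theta> f" and "\<Theta> \<noteq> {}"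
  obtains \<delta> where "\<forall>\<gamma>. \<forall>i\<in>\<Theta>. \<gamma> \<le> \<delta> \<gamma> i"
    and "\<forall>\<gamma> \<eta>. \<exists>i\<in>\<Theta>. \<exists>j\<in>\<Theta>. \<forall>y<min \<gamma> \<eta>. rho2 C y (\<delta> \<gamma> i) = rho2 C y (\<delta> \<eta> j)"
proof -
  have "\<forall>\<gamma> i. \<exists>d. i \<in> \<Theta> \<longrightarrow> \<gamma> \<le> d \<and> f \<gamma> i = rho2_restr C d \<gamma>"
    using AP unfolding ascending_path_def T_level_def by blast
  then obtain \<delta> where \<delta>: "\<And>\<gamma> i. i \<in> \<Theta> \<Longrightarrow> \<gamma> \<le> \<delta> \<gamma> i \<and> f \<gamma> i = rho2_restr C (\<delta> \<gamma> i) \<gamma>"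
    by metis
  have agree_le: "\<exists>i\<in>\<Theta>. \<exists>j\<in>\<Theta>. \<forall>y<\<gamma>. rho2 C y (\<delta> \<gamma> i) = rho2 C y (\<delta> \<eta> j)"
    if le: "\<gamma> \<le> \<eta>" for \<gamma> \<eta>
  proof (cases "\<gamma> = \<eta>")
    case True
    thus ?thesis using \<open>\<Theta> \<noteq> {}\<close> by blast
  next
    case False
    hence "\<gamma> < \<eta>" using le by simp
    then obtain i j where "i \<in> \<Theta>" "j \<in> \<Theta>" "f \<gamma> i \<subseteq>\<^sub>m f \<eta> j"
      using AP unfolding ascending_path_def by blast
    thus ?thesis using \<delta> rho2_restr_map_le by metis
  qed
  have "\<exists>i\<in>\<Theta>. \<exists>j\<in>\<Theta>. \<forall>y<min \<gamma> \<eta>. rho2 C y (\<delta> \<gamma> i) = rho2 C y (\<delta> \<eta> j)" for \<gamma> \<eta>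
  proof (cases "\<gamma> \<le> \<eta>")
    case True
    thus ?thesis using agree_le by (simp add: min_def)
  next
    case False
    hence "\<eta> \<le> \<gamma>" by simp
    then obtain j i where "j \<in> \<Theta>" "i \<in> \<Theta>"
      and eq: "\<forall>y<\<eta>. rho2 C y (\<delta> \<eta> j) = rho2 C y (\<delta> \<gamma> i)"
      using agree_le[of \<eta> \<gamma>] by blast
    moreover have "min \<gamma> \<eta> = \<eta>" using False by simp
    ultimately show ?thesis by (intro bexI[of _ i] bexI[of _ j]) (simp_all add: eq)
  qed
  hence "\<forall>\<gamma> \<eta>. \<exists>i\<in>\<Theta>. \<exists>j\<in>\<Theta>. \<forall>y<min \<gamma> \<eta>. rho2 C y (\<delta> \<gamma> i) = rho2 C y (\<delta> \<eta> j)" by blast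
  moreover have "\<forall>\<gamma>. \<forall>i\<in>\<Theta>. \<gamma> \<le> \<delta> \<gamma> i" using \<delta> by blast
  ultimately show ?thesis using that by blast
qed

lemma rho2_simple_forms_uniform:
  assumes CS: "C_sequence C" and inf: "infinite \<Theta>" and G: "cof_exceeds \<Theta> \<gamma>"
    and above: "\<forall>i\<in>\<Theta>. \<gamma> \<le> \<delta> i"
  shows "\<exists>b<\<gamma>. \<exists>c q. \<forall>i\<in>\<Theta>. rho2_simple_form C \<gamma> (\<delta> i) b (c i) (q i)"
proof -
  have "\<forall>i\<in>\<Theta>. \<exists>b c q. rho2_simple_form C \<gamma> (\<delta> i) b c q"
    using rho2_simple_form_exists[OF CS cof_exceeds_is_limit[OF inf G]] above by blast
  then obtain b c q where bcq: "\<forall>i\<in>\<Theta>. rho2_simple_form C \<gamma> (\<delta> i) (b i) (c i) (q i)" by metis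
  hence "\<forall>i\<in>\<Theta>. b i < \<gamma>" unfolding rho2_simple_form_def by blast
  hence "b ` \<Theta> \<subseteq> {..<\<gamma>}" by auto
  from cof_exceedsD[OF G this card_of_image]
  obtain w where "w < \<gamma>" "\<forall>i\<in>\<Theta>. b i < w" by blast
  hence "\<forall>i\<in>\<Theta>. rho2_simple_form C \<gamma> (\<delta> i) w (c i) (q i)"
    using bcq by (blast intro: rho2_simple_form_mono less_imp_le)
  thus ?thesis using \<open>w < \<gamma>\<close> by blast
qed

definition uniform_level ::
  "('a::wellorder \<Rightarrow> 'a set) \<Rightarrow> 'b set \<Rightarrow> ('b \<Rightarrow> 'a) \<Rightarrow> ('b \<Rightarrow> nat) \<Rightarrow> ('b \<Rightarrow> 'a) \<Rightarrow>
    'a \<Rightarrow> 'a \<Rightarrow> 'a \<Rightarrow> bool" where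
  "uniform_level C \<Theta> \<delta> c q m n \<gamma> \<longleftrightarrow> cof_exceeds \<Theta> \<gamma> \<and> n < \<gamma> \<and>
     (\<forall>i\<in>\<Theta>. rho2_simple_form C \<gamma> (\<delta> i) m (c i) (q i) \<and> (\<exists>t\<in>C (q i). m \<le> t \<and> t < n))"

lemma uniform_levels_unbounded:
  fixes C :: "'a::wellorder \<Rightarrow> 'a set" and \<Theta> :: "'b set"
  assumes R: "regular_uncountable TYPE('a)" and CS: "C_sequence C"
    and inf: "infinite \<Theta>" and B: "\<not> |{..<(\<epsilon>::'a)}| \<le>o |\<Theta>|"
    and above: "\<forall>\<gamma>. \<forall>i\<in>\<Theta>. \<gamma> \<le> \<delta> \<gamma> i"
  obtains c q m n where "\<forall>a. \<exists>\<gamma>>a. uniform_level C \<Theta> (\<delta> \<gamma>) (c \<gamma>) (q \<gamma>) m n \<gamma>"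
proof -
  have "\<forall>\<gamma>. \<exists>b c q. cof_exceeds \<Theta> \<gamma> \<longrightarrow>
          b < \<gamma> \<and> (\<forall>i\<in>\<Theta>. rho2_simple_form C \<gamma> (\<delta> \<gamma> i) b (c i) (q i))"
    using rho2_simple_forms_uniform[OF CS inf] above by blast
  then obtain b c q where bcq: "\<And>\<gamma>. cof_exceeds \<Theta> \<gamma> \<Longrightarrow>
      b \<gamma> < \<gamma> \<and> (\<forall>i\<in>\<Theta>. rho2_simple_form C \<gamma> (\<delta> \<gamma> i) (b \<gamma>) (c \<gamma> i) (q \<gamma> i))"
    by metis
  have "\<exists>m<\<gamma>. \<exists>n<\<gamma>. uniform_level C \<Theta> (\<delta> \<gamma>) (c \<gamma>) (q \<gamma>) m n \<gamma>" if G: "cof_exceeds \<Theta> \<gamma>" for \<gamma>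
  proof -
    have "\<forall>i\<in>\<Theta>. \<exists>t. t \<in> C (q \<gamma> i) \<and> b \<gamma> \<le> t \<and> t < \<gamma>"
      using bcq[OF G] unfolding rho2_simple_form_def cofinal_below_def by blast
    from bchoice[OF this] obtain t where t: "\<forall>i\<in>\<Theta>. t i \<in> C (q \<gamma> i) \<and> b \<gamma> \<le> t i \<and> t i < \<gamma>"
      by blast
    hence "t ` \<Theta> \<subseteq> {..<\<gamma>}" by auto
    from cof_exceedsD[OF G this card_of_image]
    obtain n where "n < \<gamma>" "\<forall>i\<in>\<Theta>. t i < n" by blast
    hence "uniform_level C \<Theta> (\<delta> \<gamma>) (c \<gamma>) (q \<gamma>) (b \<gamma>) n \<gamma>"
      using bcq[OF G] t G unfolding uniform_level_def by blast
    thus ?thesis using bcq[OF G] \<open>n < \<gamma>\<close> by blast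
  qed
  hence "\<exists>m n. \<forall>a. \<exists>\<gamma>>a. uniform_level C \<Theta> (\<delta> \<gamma>) (c \<gamma>) (q \<gamma>) m n \<gamma>"
    by (rule regressive_pairs_unbounded[OF R inf B])
  then obtain m n where "\<forall>a. \<exists>\<gamma>>a. uniform_level C \<Theta> (\<delta> \<gamma>) (c \<gamma>) (q \<gamma>) m n \<gamma>" by blast
  thus ?thesis by (rule that)
qed

lemma uniform_levels_transfer:
  assumes CS: "C_sequence C"
    and U1: "uniform_level C \<Theta> \<delta>1 c1 q1 m n \<gamma>" and U2: "uniform_level C \<Theta> \<delta>2 c2 q2 m n \<eta>"
    and agree: "\<exists>i\<in>\<Theta>. \<exists>j\<in>\<Theta>. \<forall>y<min \<gamma> \<eta>. rho2 C y (\<delta>1 i) = rho2 C y (\<delta>2 j)"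
    and x: "m \<le> x" "x < min \<gamma> \<eta>" "\<forall>i\<in>\<Theta>. x \<in> C (q1 i)"
  shows "\<exists>j\<in>\<Theta>. x \<in> C (q2 j)"
proof -
  obtain i j where ij: "i \<in> \<Theta>" "j \<in> \<Theta>" "\<forall>y<min \<gamma> \<eta>. rho2 C y (\<delta>1 i) = rho2 C y (\<delta>2 j)"
    using agree by blast
  have S1: "rho2_simple_form C \<gamma> (\<delta>1 i) m (c1 i) (q1 i)"
    and S2: "rho2_simple_form C \<eta> (\<delta>2 j) m (c2 j) (q2 j)"
    using U1 U2 ij(1,2) unfolding uniform_level_def by blast+
  have "n < min \<gamma> \<eta>" using U1 U2 unfolding uniform_level_def by simp
  obtain t1 where t1: "t1 \<in> C (q1 i)" "m \<le> t1" "t1 < n" using U1 ij(1) unfolding uniform_level_def by blast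
  obtain t2 where t2: "t2 \<in> C (q2 j)" "m \<le> t2" "t2 < n" using U2 ij(2) unfolding uniform_level_def by blast
  have "x \<in> C (q2 j)"
    using rho2_simple_form_transfer[OF S1 S2 min.cobounded1 min.cobounded2 ij(3)
        t1(1,2) _ t2(1,2) _ x(1,2) bspec[OF x(3) ij(1)]]
      t1(3) t2(3) \<open>n < min \<gamma> \<eta>\<close> by (meson less_trans)
  thus ?thesis using ij(2) by blast
qed

text \<open>The points lying in every \<open>C (q i)\<close> of some uniform level form an unbounded set which,
  below any \<open>\<epsilon>\<close>, is covered by the \<open>|\<Theta>|\<close> sets \<open>C (q j)\<close> of a single uniform level above \<open>\<epsilon>\<close>.\<close>
lemma uniform_levels_not_less_chi:
  assumes R: "regular_uncountable TYPE('a::wellorder)" and CS: "C_sequence C" and inf: "infinite \<Theta>"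
    and coherent: "\<forall>\<gamma> \<eta>. \<exists>i\<in>\<Theta>. \<exists>j\<in>\<Theta>. \<forall>y<min \<gamma> \<eta>. rho2 C y (\<delta> \<gamma> i) = rho2 C y (\<delta> \<eta> j)"
    and unbounded: "\<forall>a::'a. \<exists>\<gamma>>a. uniform_level C \<Theta> (\<delta> \<gamma>) (c \<gamma>) (q \<gamma>) m n \<gamma>"
  shows "\<not> less_chi \<Theta> C"
proof -
  define \<Gamma> where "\<Gamma> = {x. \<exists>\<gamma>. uniform_level C \<Theta> (\<delta> \<gamma>) (c \<gamma>) (q \<gamma>) m n \<gamma> \<and>
                             m \<le> x \<and> x < \<gamma> \<and> (\<forall>i\<in>\<Theta>. x \<in> C (q \<gamma> i))}"
  have "\<forall>a. \<exists>x\<in>\<Gamma>. a \<le> x"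
  proof
    fix a
    obtain \<gamma> where U: "uniform_level C \<Theta> (\<delta> \<gamma>) (c \<gamma>) (q \<gamma>) m n \<gamma>" and "max a m < \<gamma>"
      using unbounded by blast
    hence "cof_exceeds \<Theta> \<gamma>" "\<forall>i\<in>\<Theta>. \<gamma> \<le> q \<gamma> i \<and> cofinal_below (C (q \<gamma> i)) \<gamma>"
      unfolding uniform_level_def rho2_simple_form_def by auto
    hence "cofinal_below (\<Inter>i\<in>\<Theta>. C (q \<gamma> i)) \<gamma>" by (rule cofinal_below_INT[OF CS inf])
    then obtain x where "\<forall>i\<in>\<Theta>. x \<in> C (q \<gamma> i)" "max a m \<le> x" "x < \<gamma>"
      using \<open>max a m < \<gamma>\<close> unfolding cofinal_below_def by blast
    hence "x \<in> \<Gamma>" "a \<le> x" using U unfolding \<Gamma>_def by auto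
    thus "\<exists>x\<in>\<Gamma>. a \<le> x" by blast
  qed
  moreover have "\<forall>\<epsilon>. \<exists>\<Delta>. |\<Delta>| \<le>o |\<Theta>| \<and> \<Gamma> \<inter> {..<\<epsilon>} \<subseteq> (\<Union>\<delta>\<in>\<Delta>. C \<delta>)"
  proof
    fix \<epsilon>
    obtain \<eta> where U: "uniform_level C \<Theta> (\<delta> \<eta>) (c \<eta>) (q \<eta>) m n \<eta>" and "\<epsilon> < \<eta>"
      using unbounded by blast
    have "\<Gamma> \<inter> {..<\<epsilon>} \<subseteq> (\<Union>\<delta>\<in>q \<eta> ` \<Theta>. C \<delta>)"
    proof
      fix x assume "x \<in> \<Gamma> \<inter> {..<\<epsilon>}"
      then obtain \<gamma> where "uniform_level C \<Theta> (\<delta> \<gamma>) (c \<gamma>) (q \<gamma>) m n \<gamma>"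
        "m \<le> x" "x < \<gamma>" "\<forall>i\<in>\<Theta>. x \<in> C (q \<gamma> i)" "x < \<epsilon>"
        unfolding \<Gamma>_def by blast
      moreover have "x < min \<gamma> \<eta>" using calculation \<open>\<epsilon> < \<eta>\<close> by simp
      ultimately obtain j where "j \<in> \<Theta>" "x \<in> C (q \<eta> j)"
        using uniform_levels_transfer[OF CS _ U coherent[rule_format]] by blast
      thus "x \<in> (\<Union>\<delta>\<in>q \<eta> ` \<Theta>. C \<delta>)" by blast
    qed
    thus "\<exists>\<Delta>. |\<Delta>| \<le>o |\<Theta>| \<and> \<Gamma> \<inter> {..<\<epsilon>} \<subseteq> (\<Union>\<delta>\<in>\<Delta>. C \<delta>)" using card_of_image by blast
  qed
  ultimately show ?thesis by (rule cover_not_less_chi[OF inf])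
qed

theorem lemma7p9:
  fixes C :: "'a::wellorder \<Rightarrow> 'a set" and \<Theta> :: "'b set"
  assumes "regular_uncountable TYPE('a)"
    and "C_sequence C"
    and "infinite \<Theta>"
    and "less_chi \<Theta> C"
  shows "\<not> (\<exists>f. ascending_path C \<Theta> f)"
proof
  note R = assms(1) and CS = assms(2) and inf = assms(3)
  assume "\<exists>f. ascending_path C \<Theta> f"
  then obtain f where "ascending_path C \<Theta> f" by blast
  moreover have "\<Theta> \<noteq> {}" using inf by auto
  ultimately obtain \<delta> where above: "\<forall>\<gamma>. \<forall>i\<in>\<Theta>. \<gamma> \<le> \<delta> \<gamma> i"
    and coherent: "\<forall>\<gamma> \<eta>. \<exists>i\<in>\<Theta>. \<exists>j\<in>\<Theta>. \<forall>y<min \<gamma> \<eta>. rho2 C y (\<delta> \<gamma> i) = rho2 C y (\<delta> \<eta> j)"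
    by (rule ascending_path_coherent_walks)
  have "\<not> less_chi \<Theta> C"
  proof (cases "\<forall>\<epsilon>::'a. |{..<\<epsilon>}| \<le>o |\<Theta>|")
    case True
    thus ?thesis by (rule small_initial_segments_not_less_chi[OF R CS inf])
  next
    case False
    then obtain \<epsilon> :: 'a where "\<not> |{..<\<epsilon>}| \<le>o |\<Theta>|" by blast
    then obtain c q m n where "\<forall>a. \<exists>\<gamma>>a. uniform_level C \<Theta> (\<delta> \<gamma>) (c \<gamma>) (q \<gamma>) m n \<gamma>"
      using uniform_levels_unbounded[OF R CS inf _ above] by blast
    thus ?thesis by (rule uniform_levels_not_less_chi[OF R CS inf coherent])
  qed
  thus False using assms(4) by blast
qed

end
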